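(* Let $H$ be a complex Hilbert space with inner product $\langle\cdot,\cdot\rangle$ and norm $|\cdot|$, and let $-A$ be the generator of a holomorphic semigroup $e^{-tA}$ in $H$. Assume $A$ is positively accretive, i.e. $\nu(A)\subset\{z\in\mathbb{C}:\operatorname{Re}z>0\}$, and hyponormal, i.e. $A$ is densely defined, $D(A)\subset D(A^* )$ and $|Ax|\ge|A^*x|$ for all $x\in D(A)$. Then: (a) for every $x\in D(A^2)$ with $|x|=1$, $2\big(\operatorname{Re}\langle Ax,x\rangle\big)^2\le \operatorname{Re}\langle A^2x,x\rangle+|Ax|^2$; (b) for every $u_0\neq0$ the height function $h(t)=|e^{-tA}u_0|$ is log-convex on $[0,\infty[$, i.e. $|e^{-sA}u_0|\le |e^{-rA}u_0|^{\frac{t-s}{t-r}}|e^{-tA}u_0|^{\frac{s-r}{t-r}}$ for all $0\le r<s<t$; (c) for every $u_0\neq0$, $h$ is strictly decreasing and strictly convex on $[0,\infty[$ and differentiable from the right at $t=0$ with $h'(0)\in[-\infty,0]$, and for $|u_0|=1$, $h'(0)=\inf_{t>0}h'(t)\le -m(A)$; if moreover $u_0\in D(A)$ with $|u_0|=1$, then $h'(0)=-\operatorname{Re}\langle Au_0,u_0\rangle$ and $h\in C^1([0,\infty[,\mathbb{R})\cap C^\infty(]0,\infty[,\mathbb{R})$.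
   Context: A semigroup $e^{-tA}$ is holomorphic if it extends to a holomorphic family $e^{-zA}$ for $z$ in an open sector $\{z\in\mathbb{C}:|\arg z|<\delta\}$ for some $\delta>0$. The numerical range of $A$ is $\nu(A)=\{\langle Ax,x\rangle: x\in D(A),\ |x|=1\}$, and $m(A)=\inf\operatorname{Re}\nu(A)$. *)

theory Defs
  imports "HOL-Analysis.Analysis"
begin

text \<open>A complex Hilbert space is modelled as a real Hilbert space (type class
  real_inner + complete_space) together with an orthogonal complex structure J
  (multiplication by the imaginary unit).  The complex inner product
  (linear in the first, conjugate linear in the second argument) is
  cinner J x y = inner x y + i * inner x (J y); its induced norm is the norm of the type.\<close>

definition complex_structure :: "('a::real_inner \<Rightarrow> 'a) \<Rightarrow> bool" where
  "complex_structure J \<longleftrightarrow> linear J \<and> (\<forall>x. J (J x) = - x) \<and> (\<forall>x y. inner (J x) (J y) = inner x y)"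

definition cscale :: "('a::real_vector \<Rightarrow> 'a) \<Rightarrow> complex \<Rightarrow> 'a \<Rightarrow> 'a" where
  "cscale J c x = Re c *\<^sub>R x + Im c *\<^sub>R J x"

definition cinner :: "('a::real_inner \<Rightarrow> 'a) \<Rightarrow> 'a \<Rightarrow> 'a \<Rightarrow> complex" where
  "cinner J x y = Complex (inner x y) (inner x (J y))"

definition bounded_clinear_J :: "('a::real_normed_vector \<Rightarrow> 'a) \<Rightarrow> ('a \<Rightarrow> 'a) \<Rightarrow> bool" where
  "bounded_clinear_J J L \<longleftrightarrow> bounded_linear L \<and> (\<forall>x. L (J x) = J (L x))"

definition C0_semigroup :: "('a::real_normed_vector \<Rightarrow> 'a) \<Rightarrow> (real \<Rightarrow> 'a \<Rightarrow> 'a) \<Rightarrow> bool" where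
  "C0_semigroup J T \<longleftrightarrow>
     (\<forall>t\<ge>0. bounded_clinear_J J (T t)) \<and> T 0 = id \<and>
     (\<forall>s\<ge>0. \<forall>t\<ge>0. T (s + t) = T s \<circ> T t) \<and>
     (\<forall>x. ((\<lambda>t. T t x) \<longlongrightarrow> x) (at_right 0))"

definition is_generator :: "(real \<Rightarrow> 'a::real_normed_vector \<Rightarrow> 'a) \<Rightarrow> 'a set \<Rightarrow> ('a \<Rightarrow> 'a) \<Rightarrow> bool" where
  "is_generator T D B \<longleftrightarrow>
     D = {x. \<exists>v. ((\<lambda>t. (T t x - x) /\<^sub>R t) \<longlongrightarrow> v) (at_right 0)} \<and>
     (\<forall>x\<in>D. ((\<lambda>t. (T t x - x) /\<^sub>R t) \<longlongrightarrow> B x) (at_right 0))"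

definition sector :: "real \<Rightarrow> complex set" where
  "sector \<delta> = {z. z \<noteq> 0 \<and> \<bar>Arg z\<bar> < \<delta>}"

text \<open>Holomorphic semigroup: T extends to a holomorphic family of bounded complex-linear
  operators on an open sector (holomorphy in the weak sense, which for operator-valued
  functions is equivalent to holomorphy in operator norm).\<close>
definition holomorphic_semigroup :: "('a::real_inner \<Rightarrow> 'a) \<Rightarrow> (real \<Rightarrow> 'a \<Rightarrow> 'a) \<Rightarrow> bool" where
  "holomorphic_semigroup J T \<longleftrightarrow> C0_semigroup J T \<and>
     (\<exists>\<delta>>0. \<exists>S :: complex \<Rightarrow> 'a \<Rightarrow> 'a.
        (\<forall>z\<in>sector \<delta>. bounded_clinear_J J (S z)) \<and>
        (\<forall>t>0. S (complex_of_real t) = T t) \<and>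
        (\<forall>x y. (\<lambda>z. cinner J (S z x) y) holomorphic_on sector \<delta>))"

definition num_range :: "('a::real_inner \<Rightarrow> 'a) \<Rightarrow> 'a set \<Rightarrow> ('a \<Rightarrow> 'a) \<Rightarrow> complex set" where
  "num_range J D A = {cinner J (A x) x | x. x \<in> D \<and> norm x = 1}"

definition m_num :: "('a::real_inner \<Rightarrow> 'a) \<Rightarrow> 'a set \<Rightarrow> ('a \<Rightarrow> 'a) \<Rightarrow> real" where
  "m_num J D A = Inf (Re ` num_range J D A)"

definition pos_accretive :: "('a::real_inner \<Rightarrow> 'a) \<Rightarrow> 'a set \<Rightarrow> ('a \<Rightarrow> 'a) \<Rightarrow> bool" where
  "pos_accretive J D A \<longleftrightarrow> (\<forall>z\<in>num_range J D A. 0 < Re z)"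

definition adj_dom :: "('a::real_inner \<Rightarrow> 'a) \<Rightarrow> 'a set \<Rightarrow> ('a \<Rightarrow> 'a) \<Rightarrow> 'a set" where
  "adj_dom J D A = {y. \<exists>w. \<forall>x\<in>D. cinner J (A x) y = cinner J x w}"

definition adj :: "('a::real_inner \<Rightarrow> 'a) \<Rightarrow> 'a set \<Rightarrow> ('a \<Rightarrow> 'a) \<Rightarrow> 'a \<Rightarrow> 'a" where
  "adj J D A y = (SOME w. \<forall>x\<in>D. cinner J (A x) y = cinner J x w)"

definition hyponormal :: "('a::real_inner \<Rightarrow> 'a) \<Rightarrow> 'a set \<Rightarrow> ('a \<Rightarrow> 'a) \<Rightarrow> bool" where
  "hyponormal J D A \<longleftrightarrow> closure D = UNIV \<and> D \<subseteq> adj_dom J D A \<and>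
     (\<forall>x\<in>D. norm (adj J D A x) \<le> norm (A x))"

definition strictly_convex_on :: "real set \<Rightarrow> (real \<Rightarrow> real) \<Rightarrow> bool" where
  "strictly_convex_on S f \<longleftrightarrow> (\<forall>x\<in>S. \<forall>y\<in>S. x \<noteq> y \<longrightarrow> (\<forall>u. 0 < u \<and> u < 1 \<longrightarrow>
     f (u * x + (1 - u) * y) < u * f x + (1 - u) * f y))"

definition C1_on_closed_halfline :: "(real \<Rightarrow> real) \<Rightarrow> bool" where
  "C1_on_closed_halfline f \<longleftrightarrow> (\<exists>f'. (\<forall>t\<ge>0. (f has_real_derivative f' t) (at t within {0..}))
      \<and> continuous_on {0..} f')"

definition smooth_on :: "real set \<Rightarrow> (real \<Rightarrow> real) \<Rightarrow> bool" where
  "smooth_on S f \<longleftrightarrow> (\<exists>Df :: nat \<Rightarrow> real \<Rightarrow> real. Df 0 = f \<and>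
      (\<forall>n. \<forall>t\<in>S. (Df n has_real_derivative Df (Suc n) t) (at t)))"

end

(*
  Write u(t) = e^{-tA} u0 and f(t) = |u(t)|^2. Holomorphy of the semigroup makes u smooth on
  ]0,oo[ with u' = -Au, so f' = -2 Re<Au,u> and f'' = 2 (Re<A^2 u,u> + |Au|^2). Inequality (a),
  which is Cauchy-Schwarz for (A + A^* )x and x combined with |A^* x| <= |Ax|, says exactly
  f'^2 <= f f'', i.e. ln f is convex. Orbits of a holomorphic semigroup never vanish, by analytic
  continuation of t |-> <e^{-tA} u0, y>, so ln f is defined on [0,oo[ and (b) follows.
  Accretivity gives f' < 0, and a strictly decreasing log-convex function is strictly convex;
  the difference quotients of the convex function h = sqrt f at 0 decrease to h'(0).
  Strong differentiability of the orbit comes from the weak holomorphy via Cauchy estimates for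
  difference quotients and the uniform boundedness principle.
*)

theory Submission
  imports Defs "HOL-Complex_Analysis.Complex_Analysis"
begin

section \<open>Complex inner products and weak boundedness\<close>

lemma Re_cinner [simp]: "Re (cinner J x y) = inner x y"
  by (simp add: cinner_def)

lemma Im_cinner [simp]: "Im (cinner J x y) = inner x (J y)"
  by (simp add: cinner_def)

lemma cinner_diff_left: "cinner J (x - y) z = cinner J x z - cinner J y z"
  by (simp add: complex_eq_iff inner_diff_left)

lemma cinner_scaleR_left: "cinner J (c *\<^sub>R x) z = of_real c * cinner J x z"
  by (simp add: complex_eq_iff)

lemma complex_structure_inner_self_J:
  assumes "complex_structure J"
  shows "inner y (J y) = 0"
proof -
  have "inner y (J y) = inner (J y) (J (J y))"
    using assms unfolding complex_structure_def by metis
  also have "\<dots> = - inner y (J y)"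
    using assms by (simp add: complex_structure_def inner_commute)
  finally show ?thesis by simp
qed

lemma norm_cinner_le:
  assumes J: "complex_structure J"
  shows "norm (cinner J x y) \<le> norm x * norm y"
proof -
  define a where "a = inner x y"
  define b where "b = inner x (J y)"
  define w where "w = a *\<^sub>R y + b *\<^sub>R J y"
  have xw: "inner x w = a\<^sup>2 + b\<^sup>2"
    by (simp add: w_def a_def b_def inner_add_right power2_eq_square)
  have "(norm w)\<^sup>2 = inner w w"
    by (simp add: power2_norm_eq_inner)
  also have "\<dots> = a\<^sup>2 * inner y y + b\<^sup>2 * inner (J y) (J y) + 2 * a * b * inner y (J y)"
    by (simp add: w_def inner_add_left inner_add_right
        inner_commute[of "J y" y] power2_eq_square algebra_simps)
  also have "\<dots> = (a\<^sup>2 + b\<^sup>2) * (norm y)\<^sup>2"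
    using J complex_structure_inner_self_J[OF J, of y]
    by (simp add: complex_structure_def power2_norm_eq_inner algebra_simps)
  finally have nw: "(norm w)\<^sup>2 = (a\<^sup>2 + b\<^sup>2) * (norm y)\<^sup>2" .
  have "(a\<^sup>2 + b\<^sup>2)\<^sup>2 \<le> (norm x)\<^sup>2 * ((a\<^sup>2 + b\<^sup>2) * (norm y)\<^sup>2)"
    using Cauchy_Schwarz_ineq[of x w] unfolding xw power2_norm_eq_inner[symmetric] nw .
  then have "(a\<^sup>2 + b\<^sup>2) * (a\<^sup>2 + b\<^sup>2) \<le> (a\<^sup>2 + b\<^sup>2) * (norm x * norm y)\<^sup>2"
    by (simp add: power2_eq_square algebra_simps)
  then have "a\<^sup>2 + b\<^sup>2 \<le> (norm x * norm y)\<^sup>2"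
  proof (cases "a\<^sup>2 + b\<^sup>2 = 0")
    case False
    then have "0 < a\<^sup>2 + b\<^sup>2"
      using sum_power2_ge_zero[of a b] by linarith
    with \<open>(a\<^sup>2 + b\<^sup>2) * (a\<^sup>2 + b\<^sup>2) \<le> (a\<^sup>2 + b\<^sup>2) * (norm x * norm y)\<^sup>2\<close> show ?thesis
      by (meson mult_le_cancel_left_pos)
  qed simp
  moreover have "(norm (cinner J x y))\<^sup>2 = a\<^sup>2 + b\<^sup>2"
    by (simp add: cmod_power2 a_def b_def)
  ultimately show ?thesis
    by (metis power2_le_imp_le mult_nonneg_nonneg norm_ge_zero)
qed

lemma weakly_bounded_imp_bounded:
  fixes F :: "'a::{real_inner,complete_space} set"
  assumes weak: "\<And>y. \<exists>K. \<forall>v\<in>F. \<bar>inner v y\<bar> \<le> K"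
  shows "\<exists>M. \<forall>v\<in>F. norm v \<le> M"
proof -
  define E where "E n = {y. \<forall>v\<in>F. \<bar>inner v y\<bar> \<le> real n}" for n :: nat
  have closed_E: "closed (E n)" for n
  proof -
    have "E n = (\<Inter>v\<in>F. {y. \<bar>inner v y\<bar> \<le> real n})"
      by (auto simp: E_def)
    moreover have "closed {y. \<bar>inner v y\<bar> \<le> real n}" for v
      by (intro closed_Collect_le continuous_intros)
    ultimately show ?thesis
      by (metis closed_INT)
  qed
  have cover: "\<Union>(range E) = UNIV"
  proof (intro set_eqI iffI UNIV_I)
    fix y :: 'a
    obtain K where K: "\<forall>v\<in>F. \<bar>inner v y\<bar> \<le> K"
      using weak by blast
    obtain n :: nat where "K \<le> real n"
      using real_arch_simple by blast
    with K have "y \<in> E n"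
      by (force simp: E_def)
    then show "y \<in> \<Union>(range E)" by blast
  qed
  have "\<exists>n. interior (E n) \<noteq> {}"
  proof (rule ccontr)
    assume "\<nexists>n. interior (E n) \<noteq> {}"
    then have "euclidean interior_of \<Union>(range E) = {}"
    proof (intro Baire_category_alt)
      show "completely_metrizable_space (euclidean :: 'a topology) \<or>
          locally_compact_space (euclidean :: 'a topology) \<and> regular_space (euclidean :: 'a topology)"
        using completely_metrizable_space_euclidean by blast
      show "countable (range E)"
        by simp
      fix T assume "T \<in> range E"
      then obtain n where "T = E n"
        by blast
      moreover have "interior (E n) = {}"
        using \<open>\<nexists>n. interior (E n) \<noteq> {}\<close> by blast
      ultimately show "closedin euclidean T \<and> euclidean interior_of T = {}"
        using closed_E[of n] closed_closedin by simp
    qed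
    then show False
      using cover by simp
  qed
  then obtain n y0 where "y0 \<in> interior (E n)"
    by blast
  then obtain r where r: "r > 0" "ball y0 r \<subseteq> E n"
    by (meson interior_subset open_contains_ball_eq open_interior subset_trans)
  have "norm v \<le> 4 * real n / r" if v: "v \<in> F" for v
  proof (cases "v = 0")
    case False
    define y where "y = y0 + ((r / 2) / norm v) *\<^sub>R v"
    have "y \<in> ball y0 r" "y0 \<in> ball y0 r"
      using r False by (auto simp: y_def dist_norm)
    then have "y \<in> E n" "y0 \<in> E n"
      using r(2) by blast+
    then have "\<bar>inner v y\<bar> \<le> real n" "\<bar>inner v y0\<bar> \<le> real n"
      using v by (auto simp: E_def)
    moreover have "inner v y = inner v y0 + (r / 2) * norm v"
      using False by (simp add: y_def inner_add_right power2_norm_eq_inner[symmetric] power2_eq_square)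
    ultimately have "(r / 2) * norm v \<le> 2 * real n"
      by linarith
    then show ?thesis
      using r by (simp add: field_simps)
  qed (use r in simp)
  then show ?thesis by blast
qed

lemma weakly_continuous_imp_bounded:
  fixes S :: "'b::topological_space \<Rightarrow> 'a::{real_inner,complete_space}"
  assumes "compact K" and "\<And>y. continuous_on K (\<lambda>z. inner (S z) y)"
  shows "\<exists>M. \<forall>z\<in>K. norm (S z) \<le> M"
proof -
  have "\<exists>C. \<forall>v\<in>S ` K. \<bar>inner v y\<bar> \<le> C" for y
  proof -
    have "bounded ((\<lambda>z. inner (S z) y) ` K)"
      using assms by (intro compact_imp_bounded compact_continuous_image)
    then show ?thesis
      by (auto simp: bounded_real)
  qed
  then show ?thesis
    using weakly_bounded_imp_bounded[of "S ` K"] by blast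
qed

section \<open>Difference quotients\<close>

lemma has_vector_derivative_iff_diff_quotient:
  "(f has_vector_derivative v) (at t) \<longleftrightarrow> ((\<lambda>h. (f (t + h) - f t) /\<^sub>R h) \<longlongrightarrow> v) (at 0)"
proof -
  have "eventually (\<lambda>h. norm (f (t + h) - f t - h *\<^sub>R v) / norm h
      = norm ((f (t + h) - f t) /\<^sub>R h - v)) (at 0)"
    unfolding eventually_at_filter
  proof (intro always_eventually allI impI)
    fix h :: real assume "h \<noteq> 0"
    then have "f (t + h) - f t - h *\<^sub>R v = h *\<^sub>R ((f (t + h) - f t) /\<^sub>R h - v)"
      by (simp add: algebra_simps)
    then show "norm (f (t + h) - f t - h *\<^sub>R v) / norm h = norm ((f (t + h) - f t) /\<^sub>R h - v)"
      using \<open>h \<noteq> 0\<close> by simp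
  qed
  then show ?thesis
    unfolding has_vector_derivative_def has_derivative_at
    by (simp add: bounded_linear_scaleR_left tendsto_cong tendsto_norm_zero_iff LIM_zero_iff)
qed

lemma has_vector_derivative_if_diff_quotient_Lipschitz:
  fixes f :: "real \<Rightarrow> 'a::{real_normed_vector,complete_space}"
  assumes "0 < \<epsilon>" "0 \<le> C"
    and Lipschitz: "\<And>h k. h \<noteq> 0 \<Longrightarrow> \<bar>h\<bar> < \<epsilon> \<Longrightarrow> k \<noteq> 0 \<Longrightarrow> \<bar>k\<bar> < \<epsilon> \<Longrightarrow>
       dist ((f (t + h) - f t) /\<^sub>R h) ((f (t + k) - f t) /\<^sub>R k) \<le> C * \<bar>h - k\<bar>"
  shows "\<exists>v. (f has_vector_derivative v) (at t)"
proof -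
  define Q where "Q h = (f (t + h) - f t) /\<^sub>R h" for h
  have "cauchy_filter (filtermap Q (at 0))"
    unfolding cauchy_filter_metric_filtermap
  proof (intro allI impI)
    fix e :: real assume "0 < e"
    define \<delta> where "\<delta> = min \<epsilon> (e / (2 * C + 1))"
    have "0 < \<delta>" "\<delta> \<le> \<epsilon>"
      using \<open>0 < e\<close> \<open>0 < \<epsilon>\<close> \<open>0 \<le> C\<close> by (auto simp: \<delta>_def)
    have "C * (2 * \<delta>) \<le> C * (2 * (e / (2 * C + 1)))"
      using \<open>0 \<le> C\<close> by (intro mult_left_mono) (auto simp: \<delta>_def)
    also have "\<dots> < e"
      using \<open>0 < e\<close> \<open>0 \<le> C\<close> by (simp add: field_simps)
    finally have "C * (2 * \<delta>) < e" .
    have "dist (Q h) (Q k) < e" if "h \<noteq> 0 \<and> \<bar>h\<bar> < \<delta>" "k \<noteq> 0 \<and> \<bar>k\<bar> < \<delta>" for h k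
    proof -
      have "dist (Q h) (Q k) \<le> C * \<bar>h - k\<bar>"
        using that \<open>\<delta> \<le> \<epsilon>\<close> Lipschitz[of h k] by (simp add: Q_def)
      also have "\<dots> \<le> C * (2 * \<delta>)"
        using that \<open>0 \<le> C\<close> by (intro mult_left_mono) auto
      finally show ?thesis
        using \<open>C * (2 * \<delta>) < e\<close> by linarith
    qed
    moreover have "eventually (\<lambda>h. h \<noteq> 0 \<and> \<bar>h\<bar> < \<delta>) (at (0::real))"
      using \<open>0 < \<delta>\<close> by (auto simp: eventually_at dist_real_def)
    ultimately show "\<exists>P. eventually P (at 0) \<and> (\<forall>h k. P h \<and> P k \<longrightarrow> dist (Q h) (Q k) < e)"
      by blast
  qed
  then obtain v where "filtermap Q (at 0) \<le> nhds v"
    using cauchy_filter_complete_converges[OF _ complete_UNIV, of "filtermap Q (at 0)"]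
    by (auto simp: filtermap_bot_iff)
  then show ?thesis
    unfolding has_vector_derivative_iff_diff_quotient filterlim_def Q_def[abs_def] by blast
qed

lemma holomorphic_diff_quotients_Lipschitz:
  fixes \<phi> :: "complex \<Rightarrow> complex"
  assumes holo: "\<phi> holomorphic_on ball a R" and "0 < \<rho>" "\<rho> < R"
    and B: "\<And>u. norm (u - a) = \<rho> \<Longrightarrow> norm (\<phi> u) \<le> B"
    and h: "h \<noteq> 0" "norm h \<le> \<rho> / 2" and k: "k \<noteq> 0" "norm k \<le> \<rho> / 2"
  shows "norm ((\<phi> (a + h) - \<phi> a) / h - (\<phi> (a + k) - \<phi> a) / k) \<le> 4 * B * norm (h - k) / \<rho>\<^sup>2"
proof -
  define X where "X = (\<phi> (a + h) - \<phi> a) / h - (\<phi> (a + k) - \<phi> a) / k"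
  \<comment> \<open>By Cauchy's formula X is a contour integral of G, whose denominator is at least
    \<open>\<rho> (\<rho>/2)\<^sup>2\<close> in modulus on the circle.\<close>
  define G where "G u = \<phi> u * (h - k) / ((u - a) * (u - (a + h)) * (u - (a + k)))" for u
  have far: "\<rho> / 2 \<le> norm (u - (a + w))" if "norm (u - a) = \<rho>" "norm w \<le> \<rho> / 2" for u w
    using norm_triangle_ineq2[of "u - a" w] that by (simp add: diff_diff_eq)
  have "cball a \<rho> \<subseteq> ball a R"
    using \<open>\<rho> < R\<close> by (auto simp: dist_norm)
  then have cont: "continuous_on (cball a \<rho>) \<phi>" and holo': "\<phi> holomorphic_on ball a \<rho>"
    using holo ball_subset_cball
    by (blast intro: holomorphic_on_imp_continuous_on holomorphic_on_subset)+
  have cauchy: "((\<lambda>u. \<phi> u / (u - (a + w))) has_contour_integral (2 * of_real pi * \<i> * \<phi> (a + w)))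
      (circlepath a \<rho>)" if "norm w \<le> \<rho> / 2" for w
    using Cauchy_integral_circlepath[OF cont holo', of "a + w"] that \<open>0 < \<rho>\<close> by simp
  have combined: "((\<lambda>u. (\<phi> u / (u - (a + h)) - \<phi> u / (u - (a + 0))) / h
          - (\<phi> u / (u - (a + k)) - \<phi> u / (u - (a + 0))) / k)
      has_contour_integral (2 * of_real pi * \<i> * X)) (circlepath a \<rho>)"
  proof -
    have "((\<lambda>u. (\<phi> u / (u - (a + h)) - \<phi> u / (u - (a + 0))) / h
          - (\<phi> u / (u - (a + k)) - \<phi> u / (u - (a + 0))) / k)
      has_contour_integral ((2 * of_real pi * \<i> * \<phi> (a + h) - 2 * of_real pi * \<i> * \<phi> (a + 0)) / h
         - (2 * of_real pi * \<i> * \<phi> (a + k) - 2 * of_real pi * \<i> * \<phi> (a + 0)) / k)) (circlepath a \<rho>)"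
      using h k \<open>0 < \<rho>\<close>
      by (intro has_contour_integral_diff has_contour_integral_div cauchy) auto
    moreover have "(2 * of_real pi * \<i> * \<phi> (a + h) - 2 * of_real pi * \<i> * \<phi> (a + 0)) / h
         - (2 * of_real pi * \<i> * \<phi> (a + k) - 2 * of_real pi * \<i> * \<phi> (a + 0)) / k
        = 2 * of_real pi * \<i> * X"
      using h k by (simp add: X_def field_simps)
    ultimately show ?thesis
      by simp
  qed
  have kernel: "(c / (p - h) - c / p) / h - (c / (p - k) - c / p) / k = c * (h - k) / (p * (p - h) * (p - k))"
    if "p \<noteq> 0" "p - h \<noteq> 0" "p - k \<noteq> 0" for c p
  proof -
    have "(c / (p - w) - c / p) / w = c / (p * (p - w))" if "w \<noteq> 0" "p - w \<noteq> 0" for w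
      using that \<open>p \<noteq> 0\<close> by (simp add: divide_simps) (simp add: algebra_simps)
    moreover have "c / (p * (p - h)) - c / (p * (p - k)) = c * (h - k) / (p * (p - h) * (p - k))"
      using that by (simp add: divide_simps) (simp add: algebra_simps)
    ultimately show ?thesis
      using that h k by simp
  qed
  from combined have integral: "(G has_contour_integral (2 * of_real pi * \<i> * X)) (circlepath a \<rho>)"
  proof (rule has_contour_integral_eq)
    fix u assume "u \<in> path_image (circlepath a \<rho>)"
    then have "norm (u - a) = \<rho>"
      using \<open>0 < \<rho>\<close> by (simp add: dist_norm norm_minus_commute)
    then have "u - a \<noteq> 0" "u - a - h \<noteq> 0" "u - a - k \<noteq> 0"
      using \<open>0 < \<rho>\<close> far[of u h] far[of u k] h k by (auto simp: diff_diff_eq)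
    then show "(\<phi> u / (u - (a + h)) - \<phi> u / (u - (a + 0))) / h
        - (\<phi> u / (u - (a + k)) - \<phi> u / (u - (a + 0))) / k = G u"
      using kernel[of "u - a" "\<phi> u"] by (simp add: G_def diff_diff_eq)
  qed
  have "norm (\<phi> (a + of_real \<rho>)) \<le> B"
    using B[of "a + of_real \<rho>"] \<open>0 < \<rho>\<close> by simp
  then have "0 \<le> B"
    by (rule order_trans[OF norm_ge_zero])
  have bound: "norm (G u) \<le> B * norm (h - k) / (\<rho> * (\<rho> / 2) * (\<rho> / 2))" if u: "norm (u - a) = \<rho>" for u
  proof -
    have "\<rho> * (\<rho> / 2) * (\<rho> / 2) \<le> norm ((u - a) * (u - (a + h)) * (u - (a + k)))"
      unfolding norm_mult using u far[OF u h(2)] far[OF u k(2)] \<open>0 < \<rho>\<close> by (intro mult_mono) auto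
    moreover have "norm (\<phi> u * (h - k)) \<le> B * norm (h - k)"
      unfolding norm_mult using B[OF u] by (intro mult_right_mono) auto
    ultimately show ?thesis
      unfolding G_def norm_divide using \<open>0 < \<rho>\<close> \<open>0 \<le> B\<close> by (intro frac_le) auto
  qed
  have "2 * pi * norm X = norm (2 * of_real pi * \<i> * X)"
    by (simp add: norm_mult)
  also have "\<dots> \<le> B * norm (h - k) / (\<rho> * (\<rho> / 2) * (\<rho> / 2)) * (2 * pi * \<rho>)"
    using \<open>0 < \<rho>\<close> \<open>0 \<le> B\<close> by (intro has_contour_integral_bound_circlepath[OF integral _ _ bound]) auto
  also have "\<dots> = 2 * pi * (4 * B * norm (h - k) / \<rho>\<^sup>2)"
    using \<open>0 < \<rho>\<close> by (simp add: field_simps power2_eq_square)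
  finally show ?thesis
    using pi_gt_zero unfolding X_def by (subst (asm) mult_le_cancel_left_pos) auto
qed

lemma mvt_has_real_derivative:
  fixes f f' :: "real \<Rightarrow> real"
  assumes "a < b" "continuous_on {a..b} f"
    and "\<And>x. a < x \<Longrightarrow> x < b \<Longrightarrow> (f has_real_derivative f' x) (at x)"
  obtains \<xi> where "a < \<xi>" "\<xi> < b" "f b - f a = (b - a) * f' \<xi>"
  using mvt[OF assms(1,2), of "\<lambda>x h. f' x * h"] assms(3)
  by (metis has_field_derivative_def mult.commute)

lemma convex_on_atLeast_if_deriv_mono:
  fixes f f' :: "real \<Rightarrow> real"
  assumes cont: "continuous_on {a..} f"
    and deriv: "\<And>x. a < x \<Longrightarrow> (f has_real_derivative f' x) (at x)"
    and mono: "\<And>x y. a < x \<Longrightarrow> x \<le> y \<Longrightarrow> f' x \<le> f' y"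
  shows "convex_on {a..} f"
proof (rule convex_on_linorderI)
  fix t x y :: real
  assume t: "0 < t" "t < 1" and xy: "x \<in> {a..}" "y \<in> {a..}" "x < y"
  define z where "z = (1 - t) * x + t * y"
  have zx: "z - x = t * (y - x)" and yz: "y - z = (1 - t) * (y - x)"
    by (simp_all add: z_def algebra_simps)
  have "0 < t * (y - x)" "0 < (1 - t) * (y - x)"
    using t xy by simp_all
  then have "x < z" "z < y"
    unfolding zx[symmetric] yz[symmetric] by simp_all
  have mvt_on: "\<exists>\<xi>. u < \<xi> \<and> \<xi> < v \<and> f v - f u = (v - u) * f' \<xi>" if "a \<le> u" "u < v" for u v
  proof -
    have "continuous_on {u..v} f"
      using cont that by (auto elim!: continuous_on_subset)
    then show ?thesis
      using that by (metis deriv mvt_has_real_derivative order_le_less_trans)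
  qed
  obtain \<xi> where \<xi>: "x < \<xi>" "\<xi> < z" "f z - f x = (z - x) * f' \<xi>"
    using mvt_on[of x z] xy \<open>x < z\<close> by auto
  obtain \<eta> where \<eta>: "z < \<eta>" "\<eta> < y" "f y - f z = (y - z) * f' \<eta>"
    using mvt_on[of z y] xy \<open>x < z\<close> \<open>z < y\<close> by auto
  have "f' \<xi> \<le> f' \<eta>"
    using mono[of \<xi> \<eta>] \<xi> \<eta> xy by auto
  then have "(f z - f x) * (1 - t) \<le> (f y - f z) * t"
    using \<xi>(3) \<eta>(3) t xy by (simp add: zx yz mult_left_mono mult.commute mult.left_commute)
  then show "f ((1 - t) *\<^sub>R x + t *\<^sub>R y) \<le> (1 - t) * f x + t * f y"
    by (simp add: z_def algebra_simps)
qed (simp add: convex_real_interval)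

lemma add_one_less_exp:
  fixes x :: real
  assumes "x \<noteq> 0"
  shows "1 + x < exp x"
proof (cases "1 + x / 2 < 0")
  case True
  then show ?thesis
    using exp_gt_zero[of x] by linarith
next
  case False
  have "(1 + x / 2) * (1 + x / 2) = 1 + x + x\<^sup>2 / 4"
    by (simp add: field_simps power2_eq_square)
  then have "1 + x < (1 + x / 2) * (1 + x / 2)"
    using assms by simp
  also have "\<dots> \<le> exp (x / 2) * exp (x / 2)"
    using False exp_ge_add_one_self[of "x / 2"] by (intro mult_mono) auto
  also have "\<dots> = exp x"
    by (simp flip: exp_add)
  finally show ?thesis .
qed

lemma exp_strictly_convex:
  fixes a b \<theta> :: real
  assumes "a \<noteq> b" "0 < \<theta>" "\<theta> < 1"
  shows "exp (\<theta> * a + (1 - \<theta>) * b) < \<theta> * exp a + (1 - \<theta>) * exp b"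
proof -
  define c where "c = \<theta> * a + (1 - \<theta>) * b"
  have "a - c = (1 - \<theta>) * (a - b)" "b - c = \<theta> * (b - a)"
    by (simp_all add: c_def algebra_simps)
  then have "a - c \<noteq> 0" "b - c \<noteq> 0"
    using assms by simp_all
  moreover have "exp c * (1 + (w - c)) < exp w" if "w - c \<noteq> 0" for w
    using mult_strict_left_mono[OF add_one_less_exp[OF that] exp_gt_zero[of c]]
    by (simp add: mult_exp_exp)
  ultimately have "exp c * (1 + (a - c)) < exp a" "exp c * (1 + (b - c)) < exp b"
    by blast+
  then have "\<theta> * (exp c * (1 + (a - c))) + (1 - \<theta>) * (exp c * (1 + (b - c)))
      < \<theta> * exp a + (1 - \<theta>) * exp b"
    using assms by (intro add_strict_mono mult_strict_left_mono) auto
  moreover have "\<theta> * (exp c * (1 + (a - c))) + (1 - \<theta>) * (exp c * (1 + (b - c))) = exp c"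
    by (simp add: c_def algebra_simps)
  ultimately show ?thesis
    by (simp add: c_def)
qed

lemma tendsto_at_right_INF_if_mono:
  fixes f :: "real \<Rightarrow> 'b::{complete_linorder,linorder_topology}"
  assumes mono: "\<And>s t. a < s \<Longrightarrow> s \<le> t \<Longrightarrow> f s \<le> f t"
  shows "(f \<longlongrightarrow> (INF t\<in>{a<..}. f t)) (at_right a)"
proof (rule order_tendstoI)
  fix c assume "c < (INF t\<in>{a<..}. f t)"
  then show "eventually (\<lambda>t. c < f t) (at_right a)"
    by (auto simp: eventually_at_right_less less_INF_D eventually_at_filter intro!: eventually_at_rightI[of a "a + 1"])
next
  fix c assume "(INF t\<in>{a<..}. f t) < c"
  then obtain t0 where "a < t0" "f t0 < c"
    by (auto simp: INF_less_iff)
  show "eventually (\<lambda>t. f t < c) (at_right a)"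
  proof (rule eventually_at_rightI[of a t0])
    fix t assume "t \<in> {a<..<t0}"
    then show "f t < c"
      using mono[of t t0] \<open>f t0 < c\<close> by auto
  qed fact
qed

fun k_differentiable_on :: "nat \<Rightarrow> real set \<Rightarrow> (real \<Rightarrow> 'b::real_normed_vector) \<Rightarrow> bool" where
  "k_differentiable_on 0 S f \<longleftrightarrow> True"
| "k_differentiable_on (Suc n) S f \<longleftrightarrow>
     (\<exists>f'. (\<forall>t\<in>S. (f has_vector_derivative f' t) (at t)) \<and> k_differentiable_on n S f')"

lemma k_differentiable_on_SucD: "k_differentiable_on (Suc n) S f \<Longrightarrow> k_differentiable_on n S f"
  by (induction n arbitrary: f) auto

lemma k_differentiable_on_const: "k_differentiable_on n S (\<lambda>t. c)"
  by (induction n arbitrary: c) (auto intro!: exI[of _ "\<lambda>t. 0"])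

lemma k_differentiable_on_add:
  "k_differentiable_on n S f \<Longrightarrow> k_differentiable_on n S g \<Longrightarrow> k_differentiable_on n S (\<lambda>t. f t + g t)"
proof (induction n arbitrary: f g)
  case (Suc n)
  then obtain f' g' where "\<forall>t\<in>S. (f has_vector_derivative f' t) (at t)" "k_differentiable_on n S f'"
    "\<forall>t\<in>S. (g has_vector_derivative g' t) (at t)" "k_differentiable_on n S g'"
    by auto
  with Suc.IH show ?case
    by (auto intro!: exI[of _ "\<lambda>t. f' t + g' t"] has_vector_derivative_add)
qed simp

lemma (in bounded_bilinear) k_differentiable_on_prod:
  "k_differentiable_on n S f \<Longrightarrow> k_differentiable_on n S g \<Longrightarrow> k_differentiable_on n S (\<lambda>t. prod (f t) (g t))"
proof (induction n arbitrary: f g)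
  case (Suc n)
  then obtain f' g' where f': "\<forall>t\<in>S. (f has_vector_derivative f' t) (at t)" "k_differentiable_on n S f'"
    and g': "\<forall>t\<in>S. (g has_vector_derivative g' t) (at t)" "k_differentiable_on n S g'"
    by auto
  have "k_differentiable_on n S f" "k_differentiable_on n S g"
    using Suc.prems by (simp_all only: k_differentiable_on_SucD)
  then have "k_differentiable_on n S (\<lambda>t. prod (f t) (g' t) + prod (f' t) (g t))"
    using Suc.IH f'(2) g'(2) by (intro k_differentiable_on_add)
  moreover have "((\<lambda>t. prod (f t) (g t)) has_vector_derivative prod (f t) (g' t) + prod (f' t) (g t)) (at t)"
    if "t \<in> S" for t
    using has_vector_derivative[OF f'(1)[rule_format, OF that] g'(1)[rule_format, OF that]] .
  ultimately show ?case
    by (auto intro!: exI[of _ "\<lambda>t. prod (f t) (g' t) + prod (f' t) (g t)"])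
qed simp

lemmas k_differentiable_on_mult = bounded_bilinear.k_differentiable_on_prod[OF bounded_bilinear_mult]
lemmas k_differentiable_on_inner = bounded_bilinear.k_differentiable_on_prod[OF bounded_bilinear_inner]

lemma k_differentiable_on_compose:
  fixes f g :: "real \<Rightarrow> real"
  assumes "k_differentiable_on n T g" "k_differentiable_on n S f" "\<And>t. t \<in> S \<Longrightarrow> f t \<in> T"
  shows "k_differentiable_on n S (\<lambda>t. g (f t))"
  using assms
proof (induction n arbitrary: f g)
  case (Suc n)
  then obtain f' g' where f': "\<forall>t\<in>S. (f has_real_derivative f' t) (at t)" "k_differentiable_on n S f'"
    and g': "\<forall>t\<in>T. (g has_real_derivative g' t) (at t)" "k_differentiable_on n T g'"
    by (auto simp: has_real_derivative_iff_has_vector_derivative)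
  have "((\<lambda>t. g (f t)) has_real_derivative g' (f t) * f' t) (at t)" if "t \<in> S" for t
    using DERIV_chain2[OF g'(1)[rule_format, OF Suc.prems(3)[OF that]] f'(1)[rule_format, OF that]] .
  moreover have "k_differentiable_on n S f"
    using Suc.prems(2) by (rule k_differentiable_on_SucD)
  then have "k_differentiable_on n S (\<lambda>t. g' (f t) * f' t)"
    by (rule k_differentiable_on_mult[OF Suc.IH[OF g'(2) _ Suc.prems(3)] f'(2)])
  ultimately show ?case
    by (auto simp: has_real_derivative_iff_has_vector_derivative intro!: exI[of _ "\<lambda>t. g' (f t) * f' t"])
qed simp

lemma k_differentiable_on_powr: "k_differentiable_on n {0<..} (\<lambda>x::real. x powr r)"
proof (induction n arbitrary: r)
  case (Suc n)
  have "k_differentiable_on n {0<..} (\<lambda>x::real. r * x powr (r - 1))"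
    by (rule k_differentiable_on_mult[OF k_differentiable_on_const Suc.IH])
  moreover have "((\<lambda>x. x powr r) has_vector_derivative r * x powr (r - 1)) (at x)" if "0 < x" for x :: real
    using has_real_derivative_powr[OF that] by (simp add: has_real_derivative_iff_has_vector_derivative)
  ultimately show ?case
    by (auto intro!: exI[of _ "\<lambda>x. r * x powr (r - 1)"])
qed simp

lemma k_differentiable_on_cong:
  assumes "open S" "\<And>t. t \<in> S \<Longrightarrow> f t = g t" "k_differentiable_on n S f"
  shows "k_differentiable_on n S g"
  using assms(2,3)
proof (induction n arbitrary: f g)
  case (Suc n)
  then obtain f' where f': "\<forall>t\<in>S. (f has_vector_derivative f' t) (at t)" "k_differentiable_on n S f'"
    by auto
  have "(g has_vector_derivative f' t) (at t)" if "t \<in> S" for t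
    using has_vector_derivative_transform_within_open[OF f'(1)[rule_format, OF that] \<open>open S\<close> that] Suc.prems(1)
    by auto
  with f'(2) show ?case
    by auto
qed simp

lemma k_differentiable_on_deriv:
  fixes f :: "real \<Rightarrow> real"
  assumes "open S" "k_differentiable_on (Suc n) S f"
  shows "k_differentiable_on n S (deriv f)" "\<And>t. t \<in> S \<Longrightarrow> (f has_real_derivative deriv f t) (at t)"
proof -
  obtain f' where f': "\<forall>t\<in>S. (f has_real_derivative f' t) (at t)" "k_differentiable_on n S f'"
    using assms(2) by (auto simp: has_real_derivative_iff_has_vector_derivative)
  then have eq: "\<And>t. t \<in> S \<Longrightarrow> f' t = deriv f t"
    by (metis DERIV_imp_deriv)
  show "k_differentiable_on n S (deriv f)"
    using eq by (rule k_differentiable_on_cong[OF \<open>open S\<close> _ f'(2)])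
  show "\<And>t. t \<in> S \<Longrightarrow> (f has_real_derivative deriv f t) (at t)"
    using f'(1) eq by metis
qed

lemma smooth_on_if_k_differentiable_on:
  fixes f :: "real \<Rightarrow> real"
  assumes "open S" "\<And>n. k_differentiable_on n S f"
  shows "smooth_on S f"
proof -
  have k: "k_differentiable_on n S ((deriv ^^ k) f)" for k n
  proof (induction k arbitrary: n)
    case (Suc k)
    show ?case
      using k_differentiable_on_deriv(1)[OF \<open>open S\<close> Suc.IH[of "Suc n"]] by simp
  qed (simp add: assms(2))
  show ?thesis
    unfolding smooth_on_def
  proof (intro exI[of _ "\<lambda>n. (deriv ^^ n) f"] conjI allI ballI)
    fix n t assume "t \<in> S"
    then show "((deriv ^^ n) f has_real_derivative (deriv ^^ Suc n) f t) (at t)"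
      using k_differentiable_on_deriv(2)[OF \<open>open S\<close> k[of "Suc 0" n]] by simp
  qed simp
qed

lemma k_differentiable_on_if_derivative_chain:
  assumes "\<And>n t. t \<in> S \<Longrightarrow> (U n has_vector_derivative U (Suc n) t) (at t)"
  shows "k_differentiable_on n S (U m)"
  using assms by (induction n arbitrary: m) auto

section \<open>Hyponormal and accretive operators\<close>

lemma hyponormal_adj:
  assumes "hyponormal J D A" "x \<in> D" "z \<in> D"
  shows "cinner J (A z) x = cinner J z (adj J D A x)"
proof -
  have "\<exists>w. \<forall>z\<in>D. cinner J (A z) x = cinner J z w"
    using assms(1,2) by (auto simp: hyponormal_def adj_dom_def)
  then have "\<forall>z\<in>D. cinner J (A z) x = cinner J z (adj J D A x)"
    unfolding adj_def by (rule someI_ex)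
  with assms(3) show ?thesis
    by blast
qed

lemma hyponormal_inner_square_le:
  assumes hyp: "hyponormal J D A" and x: "x \<in> D" "A x \<in> D"
  shows "2 * (inner (A x) x)\<^sup>2 \<le> (inner (A (A x)) x + (norm (A x))\<^sup>2) * (norm x)\<^sup>2"
proof -
  define a b where "a = A x" and "b = adj J D A x"
  have ab: "inner (A (A x)) x = inner a b"
    using arg_cong[OF hyponormal_adj[OF hyp x(1) x(2)], of Re] by (simp add: a_def b_def)
  have "inner (A x) x = inner x b"
    using arg_cong[OF hyponormal_adj[OF hyp x(1) x(1)], of Re] by (simp add: b_def)
  then have "inner b x = inner (A x) x"
    by (simp add: inner_commute)
  then have "inner (a + b) x = 2 * inner (A x) x"
    by (simp add: a_def inner_add_left)
  then have "4 * (inner (A x) x)\<^sup>2 \<le> (norm (a + b))\<^sup>2 * (norm x)\<^sup>2"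
    using Cauchy_Schwarz_ineq[of "a + b" x] by (simp add: power2_norm_eq_inner power_mult_distrib)
  also have "(norm (a + b))\<^sup>2 \<le> 2 * (norm a)\<^sup>2 + 2 * inner a b"
  proof -
    have "norm b \<le> norm a"
      using hyp x by (simp add: hyponormal_def a_def b_def)
    then have "(norm b)\<^sup>2 \<le> (norm a)\<^sup>2"
      by (simp add: power_mono)
    then show ?thesis
      by (simp add: power2_norm_eq_inner inner_add_left inner_add_right inner_commute)
  qed
  finally show ?thesis
    using ab by (simp add: a_def algebra_simps mult_right_mono)
qed

lemma m_num_le:
  assumes "pos_accretive J D A" "c \<in> Re ` num_range J D A"
  shows "m_num J D A \<le> c"
proof -
  have "bdd_below (Re ` num_range J D A)"
    using assms(1) by (auto simp: pos_accretive_def bdd_below_def intro!: exI[of _ 0] less_imp_le)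
  then show ?thesis
    unfolding m_num_def by (rule cInf_lower[OF assms(2)])
qed

section \<open>Semigroups and their generators\<close>

locale C0_generator =
  fixes J :: "'a::real_normed_vector \<Rightarrow> 'a" and T :: "real \<Rightarrow> 'a \<Rightarrow> 'a"
    and D :: "'a set" and A :: "'a \<Rightarrow> 'a"
  assumes C0: "C0_semigroup J T" and generator: "is_generator T D (\<lambda>x. - A x)"
begin

lemma T_linear: "0 \<le> t \<Longrightarrow> linear (T t)"
  using C0 by (simp add: C0_semigroup_def bounded_clinear_J_def bounded_linear.linear)

lemma T_bounded_linear: "0 \<le> t \<Longrightarrow> bounded_linear (T t)"
  using C0 by (simp add: C0_semigroup_def bounded_clinear_J_def)

lemma T_0 [simp]: "T 0 x = x"
  using C0 by (simp add: C0_semigroup_def)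

lemma T_add: "0 \<le> s \<Longrightarrow> 0 \<le> t \<Longrightarrow> T (s + t) x = T s (T t x)"
  using C0 by (simp add: C0_semigroup_def)

lemma T_tendsto_0: "((\<lambda>t. T t x) \<longlongrightarrow> x) (at_right 0)"
  using C0 by (simp add: C0_semigroup_def)

lemma generator_tendsto: "x \<in> D \<Longrightarrow> ((\<lambda>t. (T t x - x) /\<^sub>R t) \<longlongrightarrow> - A x) (at_right 0)"
  using generator by (simp add: is_generator_def)

lemma generator_domainI:
  assumes "((\<lambda>t. (T t x - x) /\<^sub>R t) \<longlongrightarrow> v) (at_right 0)"
  shows "x \<in> D" "A x = - v"
proof -
  show "x \<in> D"
    using assms generator by (auto simp: is_generator_def)
  then show "A x = - v"
    using tendsto_unique[OF trivial_limit_at_right_real generator_tendsto assms] by (metis minus_minus)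
qed

lemma generator_domainI_eventually_eq:
  assumes "((\<lambda>t. f t) \<longlongrightarrow> v) (at_right 0)"
    and "\<And>t. 0 < t \<Longrightarrow> f t = (T t x - x) /\<^sub>R t"
  shows "x \<in> D" "A x = - v"
proof -
  have "eventually (\<lambda>t. f t = (T t x - x) /\<^sub>R t) (at_right 0)"
    using eventually_at_right_less[of "0::real"] by (rule eventually_mono) (simp add: assms(2))
  from generator_domainI[OF Lim_transform_eventually[OF assms(1) this]]
  show "x \<in> D" "A x = - v" .
qed

lemma domain_scaleR:
  assumes "x \<in> D"
  shows "c *\<^sub>R x \<in> D" "A (c *\<^sub>R x) = c *\<^sub>R A x"
  using generator_domainI_eventually_eq[OF tendsto_scaleR[OF tendsto_const generator_tendsto[OF assms]],
      where x = "c *\<^sub>R x"]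
  by (simp_all add: linear_scale[OF T_linear] algebra_simps)

lemma domain_T:
  assumes "x \<in> D" "0 \<le> t"
  shows "T t x \<in> D" "A (T t x) = T t (A x)"
proof -
  have "T t ((T s x - x) /\<^sub>R s) = (T s (T t x) - T t x) /\<^sub>R s" if "0 < s" for s
  proof -
    have "T s (T t x) = T t (T s x)"
      using T_add[of s t x] T_add[of t s x] assms that by (simp add: add.commute)
    then show ?thesis
      using assms(2) by (simp add: linear_scale[OF T_linear] linear_diff[OF T_linear])
  qed
  from generator_domainI_eventually_eq[OF bounded_linear.tendsto[OF T_bounded_linear generator_tendsto[OF assms(1)]], OF assms(2) this]
  show "T t x \<in> D" "A (T t x) = T t (A x)"
    using linear_neg[OF T_linear[OF assms(2)]] by simp_all
qed

end

lemma sector_contains_ball: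
  assumes "0 < \<delta>" "0 < t"
  obtains R where "0 < R" "ball (complex_of_real t) R \<subseteq> sector \<delta>"
proof -
  have "continuous (at (complex_of_real t)) Arg"
    using assms(2) by (intro continuous_at_Arg) (simp add: complex_nonpos_Reals_iff)
  then obtain e where e: "0 < e" "\<And>z. dist z (complex_of_real t) < e \<Longrightarrow> \<bar>Arg z\<bar> < \<delta>"
    unfolding continuous_at_eps_delta using assms by (force simp: dist_real_def)
  have "ball (complex_of_real t) (min e t) \<subseteq> sector \<delta>"
  proof
    fix z assume z: "z \<in> ball (complex_of_real t) (min e t)"
    then have "z \<noteq> 0"
      by (auto simp: dist_norm)
    with z e(2) show "z \<in> sector \<delta>"
      by (simp add: sector_def dist_commute)
  qed
  with that[of "min e t"] e(1) assms(2) show ?thesis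
    by simp
qed

locale holomorphic_C0_generator = C0_generator J T D A
  for J :: "'a::{real_inner,complete_space} \<Rightarrow> 'a" and T D A +
  assumes J: "complex_structure J" and holomorphic: "holomorphic_semigroup J T"
begin

lemma holomorphic_extension:
  obtains \<delta> S where "0 < \<delta>" "\<And>t. 0 < t \<Longrightarrow> S (complex_of_real t) = T t"
    "\<And>x y. (\<lambda>z. cinner J (S z x) y) holomorphic_on sector \<delta>"
proof -
  from holomorphic obtain \<delta> S where "0 < \<delta>" "\<forall>t>0. S (complex_of_real t) = T t"
    "\<forall>x y. (\<lambda>z. cinner J (S z x) y) holomorphic_on sector \<delta>"
    unfolding holomorphic_semigroup_def by blast
  with that show thesis
    by blast
qed

lemma orbit_differentiable:
  assumes "0 < a"
  shows "\<exists>v. ((\<lambda>s. T s x) has_vector_derivative v) (at a)"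
proof -
  obtain \<delta> S where "0 < \<delta>" and ST: "\<And>t. 0 < t \<Longrightarrow> S (complex_of_real t) = T t"
    and Sh: "\<And>x y. (\<lambda>z. cinner J (S z x) y) holomorphic_on sector \<delta>"
    using holomorphic_extension by blast
  obtain R where "0 < R" and R: "ball (complex_of_real a) R \<subseteq> sector \<delta>"
    using sector_contains_ball[OF \<open>0 < \<delta>\<close> assms] by blast
  define \<rho> where "\<rho> = min (R / 2) (a / 2)"
  have \<rho>: "0 < \<rho>" "\<rho> < R" "\<rho> \<le> a / 2"
    using \<open>0 < R\<close> assms by (auto simp: \<rho>_def)
  have hol_ball: "(\<lambda>z. cinner J (S z x) y) holomorphic_on ball (complex_of_real a) R" for y
    using Sh R by (rule holomorphic_on_subset)
  have "sphere (complex_of_real a) \<rho> \<subseteq> ball (complex_of_real a) R"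
    using \<rho> by auto
  then have "continuous_on (sphere (complex_of_real a) \<rho>) (\<lambda>z. cinner J (S z x) y)" for y
    by (rule continuous_on_subset[OF holomorphic_on_imp_continuous_on[OF hol_ball]])
  then have "continuous_on (sphere (complex_of_real a) \<rho>) (\<lambda>z. inner (S z x) y)" for y
    using continuous_on_Re by fastforce
  then have "\<exists>M. \<forall>z\<in>sphere (complex_of_real a) \<rho>. norm (S z x) \<le> M"
    by (rule weakly_continuous_imp_bounded[OF compact_sphere])
  then obtain M0 where M0: "\<forall>z\<in>sphere (complex_of_real a) \<rho>. norm (S z x) \<le> M0"
    by blast
  define M where "M = max M0 0"
  have M: "0 \<le> M" "\<And>z. norm (z - complex_of_real a) = \<rho> \<Longrightarrow> norm (S z x) \<le> M"
    using M0 by (simp_all add: M_def dist_norm norm_minus_commute le_max_iff_disj)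
  define Q where "Q h = (T (a + h) x - T a x) /\<^sub>R h" for h
  have Q: "cinner J (Q h) y = (cinner J (S (complex_of_real a + complex_of_real h) x) y
      - cinner J (S (complex_of_real a) x) y) / complex_of_real h" if "\<bar>h\<bar> \<le> a / 2" for h y
  proof -
    have "S (complex_of_real a + complex_of_real h) = T (a + h)" "S (complex_of_real a) = T a"
      using ST[of "a + h"] ST[OF assms] that assms by simp_all
    moreover have "cinner J (Q h) y = inverse (complex_of_real h) * (cinner J (T (a + h) x) y - cinner J (T a x) y)"
      by (simp add: Q_def cinner_scaleR_left cinner_diff_left)
    ultimately show ?thesis
      by (simp add: divide_inverse_commute)
  qed
  have Lipschitz: "dist (Q h) (Q k) \<le> 4 * M / \<rho>\<^sup>2 * \<bar>h - k\<bar>"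
    if h: "h \<noteq> 0" "\<bar>h\<bar> < \<rho> / 2" and k: "k \<noteq> 0" "\<bar>k\<bar> < \<rho> / 2" for h k
  proof -
    \<comment> \<open>The weak estimate, tested against the difference y itself, bounds its norm.\<close>
    define y where "y = Q h - Q k"
    have bound: "norm (cinner J (S u x) y) \<le> M * norm y" if "norm (u - complex_of_real a) = \<rho>" for u
    proof -
      have "norm (cinner J (S u x) y) \<le> norm (S u x) * norm y"
        by (rule norm_cinner_le[OF J])
      also have "\<dots> \<le> M * norm y"
        using M(2)[OF that] by (rule mult_right_mono) simp
      finally show ?thesis .
    qed
    have "cinner J y y = (cinner J (S (complex_of_real a + complex_of_real h) x) y - cinner J (S (complex_of_real a) x) y) / complex_of_real h
        - (cinner J (S (complex_of_real a + complex_of_real k) x) y - cinner J (S (complex_of_real a) x) y) / complex_of_real k"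
      using Q[of h y] Q[of k y] h k \<rho>(3) by (simp add: y_def cinner_diff_left)
    also have "norm \<dots> \<le> 4 * (M * norm y) * norm (complex_of_real h - complex_of_real k) / \<rho>\<^sup>2"
      using h k by (intro holomorphic_diff_quotients_Lipschitz[OF hol_ball \<rho>(1,2) bound]) simp_all
    also have "\<dots> = norm y * (4 * M / \<rho>\<^sup>2 * \<bar>h - k\<bar>)"
      by (simp flip: of_real_diff)
    finally have "norm (cinner J y y) \<le> norm y * (4 * M / \<rho>\<^sup>2 * \<bar>h - k\<bar>)" .
    moreover have "norm y * norm y = Re (cinner J y y)"
      by (simp add: power2_norm_eq_inner[symmetric] power2_eq_square)
    ultimately have "norm y * norm y \<le> norm y * (4 * M / \<rho>\<^sup>2 * \<bar>h - k\<bar>)"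
      using complex_Re_le_cmod[of "cinner J y y"] by linarith
    then show ?thesis
    proof (cases "norm y = 0")
      case False
      then have "0 < norm y"
        by simp
      with \<open>norm y * norm y \<le> norm y * (4 * M / \<rho>\<^sup>2 * \<bar>h - k\<bar>)\<close>
      have "norm y \<le> 4 * M / \<rho>\<^sup>2 * \<bar>h - k\<bar>"
        by (meson mult_le_cancel_left_pos)
      then show ?thesis
        by (simp add: y_def dist_norm)
    qed (use M(1) in \<open>simp add: y_def dist_norm\<close>)
  qed
  show ?thesis
  proof (rule has_vector_derivative_if_diff_quotient_Lipschitz)
    show "0 < \<rho> / 2" "0 \<le> 4 * M / \<rho>\<^sup>2"
      using \<rho>(1) M(1) by simp_all
  qed (use Lipschitz in \<open>simp add: Q_def\<close>)
qed

lemma orbit_has_vector_derivative: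
  assumes "0 < t"
  shows "T t x \<in> D" "((\<lambda>s. T s x) has_vector_derivative - A (T t x)) (at t)"
proof -
  obtain v where v: "((\<lambda>s. T s x) has_vector_derivative v) (at t)"
    using orbit_differentiable[OF assms] by blast
  then have lim: "((\<lambda>h. (T (t + h) x - T t x) /\<^sub>R h) \<longlongrightarrow> v) (at_right 0)"
    unfolding has_vector_derivative_iff_diff_quotient by (rule tendsto_mono[OF at_le, rotated]) simp
  have eq: "(T (t + h) x - T t x) /\<^sub>R h = (T h (T t x) - T t x) /\<^sub>R h" if "0 < h" for h
    using T_add[of h t x] assms that by (simp add: add.commute)
  have "T t x \<in> D" "A (T t x) = - v"
    by (rule generator_domainI_eventually_eq[OF lim]; simp add: eq)+
  with v show "T t x \<in> D" "((\<lambda>s. T s x) has_vector_derivative - A (T t x)) (at t)"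
    by simp_all
qed

lemma iterate_orbit:
  assumes "0 < s" "s \<le> t"
  shows "(A ^^ n) (T t x) \<in> D \<and> (A ^^ n) (T t x) = T (t - s) ((A ^^ n) (T s x))"
  using assms
proof (induction n arbitrary: s t)
  case 0
  have "T t x = T (t - s) (T s x)"
    using T_add[of "t - s" s x] 0 by simp
  moreover have "T t x \<in> D"
    using orbit_has_vector_derivative(1)[of t x] 0 by simp
  ultimately show ?case
    by simp
next
  case (Suc n)
  have shift: "(A ^^ Suc n) (T t x) = T (t - r) ((A ^^ Suc n) (T r x))" if "0 < r" "r \<le> t" for r
    using Suc.IH[OF that] Suc.IH[of r r] domain_T[of "(A ^^ n) (T r x)" "t - r"] that by simp
  have "T (t / 2) ((A ^^ Suc n) (T (t / 2) x)) \<in> D"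
    using Suc.prems orbit_has_vector_derivative(1) by simp
  then show ?case
    using shift[of "t / 2"] shift[OF Suc.prems] Suc.prems by simp
qed

lemma iterate_has_vector_derivative:
  assumes "0 < t"
  shows "((\<lambda>\<tau>. (A ^^ n) (T \<tau> x)) has_vector_derivative - (A ^^ Suc n) (T t x)) (at t)"
proof -
  define s where "s = t / 2"
  have s: "0 < s" "s < t"
    using assms by (auto simp: s_def)
  define y where "y = (A ^^ n) (T s x)"
  have "((\<lambda>\<tau>. \<tau> - s) has_vector_derivative 1) (at t)"
    by (auto intro!: derivative_eq_intros)
  moreover have "((\<lambda>\<sigma>. T \<sigma> y) has_vector_derivative - A (T (t - s) y)) (at (t - s))"
    using orbit_has_vector_derivative(2) s by simp
  ultimately have "((\<lambda>\<tau>. T (\<tau> - s) y) has_vector_derivative 1 *\<^sub>R - A (T (t - s) y)) (at t)"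
    by (rule vector_diff_chain_at[unfolded o_def])
  moreover have "A (T (t - s) y) = (A ^^ Suc n) (T t x)"
    using iterate_orbit[of s t n x] s by (simp add: y_def)
  ultimately have shifted: "((\<lambda>\<tau>. T (\<tau> - s) y) has_vector_derivative - (A ^^ Suc n) (T t x)) (at t)"
    by simp
  show ?thesis
  proof (rule has_vector_derivative_transform_within_open[OF shifted open_greaterThan])
    show "t \<in> {s<..}"
      using s by simp
    fix \<tau> assume "\<tau> \<in> {s<..}"
    then show "T (\<tau> - s) y = (A ^^ n) (T \<tau> x)"
      using iterate_orbit[of s \<tau> n x] s by (simp add: y_def)
  qed
qed

lemma orbit_continuous_on: "continuous_on {0..} (\<lambda>t. T t x)"
  unfolding continuous_on_eq_continuous_within
proof
  fix t :: real assume "t \<in> {0..}"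
  show "continuous (at t within {0..}) (\<lambda>t. T t x)"
  proof (cases "t = 0")
    case True
    have "((\<lambda>t. T t x) \<longlongrightarrow> T 0 x) (at 0 within {0..})"
      using T_tendsto_0[of x] by (simp add: at_within_Ici_at_right)
    with True show ?thesis
      by (simp add: continuous_within)
  next
    case False
    with \<open>t \<in> {0..}\<close> have "0 < t"
      by simp
    then have "((\<lambda>s. T s x) has_derivative (\<lambda>h. h *\<^sub>R - A (T t x))) (at t)"
      using orbit_has_vector_derivative(2) by (simp add: has_vector_derivative_def)
    then show ?thesis
      by (rule continuous_at_imp_continuous_within[OF has_derivative_continuous])
  qed
qed

lemma orbit_nonzero:
  assumes "x \<noteq> 0" "0 \<le> t"
  shows "T t x \<noteq> 0"
proof
  assume "T t x = 0"
  obtain \<delta> S where "0 < \<delta>" and ST: "\<And>t. 0 < t \<Longrightarrow> S (complex_of_real t) = T t"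
    and Sh: "\<And>x y. (\<lambda>z. cinner J (S z x) y) holomorphic_on sector \<delta>"
    using holomorphic_extension by blast
  define V where "V = connected_component_set (interior (sector \<delta>)) 1"
  have "complex_of_real ` {0<..} \<subseteq> interior (sector \<delta>)"
  proof
    fix z assume "z \<in> complex_of_real ` {0<..}"
    then obtain \<tau> where "0 < \<tau>" "z = complex_of_real \<tau>"
      by auto
    then show "z \<in> interior (sector \<delta>)"
      using sector_contains_ball[OF \<open>0 < \<delta>\<close> \<open>0 < \<tau>\<close>] by (metis mem_interior)
  qed
  moreover have "connected (complex_of_real ` {0<..})"
    by (intro connected_continuous_image continuous_intros) auto
  ultimately have positive_reals: "complex_of_real ` {0<..} \<subseteq> V"
    unfolding V_def by (intro connected_component_maximal) (auto intro: image_eqI[of 1 _ 1])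
  have "open V" "connected V"
    by (simp_all add: V_def open_connected_component)
  have "V \<subseteq> sector \<delta>"
    using connected_component_subset[of "interior (sector \<delta>)" 1] interior_subset[of "sector \<delta>"]
    unfolding V_def by blast
  have "cinner J (T \<tau> x) y = 0" if "0 < \<tau>" for \<tau> y
  proof -
    define U where "U = complex_of_real ` {t<..}"
    have "U \<subseteq> V"
      using positive_reals \<open>0 \<le> t\<close> by (auto simp: U_def)
    have "complex_of_real r \<in> V" if "0 < r" for r
      using positive_reals that by blast
    then have "complex_of_real (t + 1) \<in> V" "complex_of_real \<tau> \<in> V"
      using \<open>0 \<le> t\<close> \<open>0 < \<tau>\<close> by (simp_all only: add_nonneg_pos zero_less_one)
    have limit_point: "complex_of_real (t + 1) islimpt U"
      unfolding islimpt_approachable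
    proof (intro allI impI)
      fix e :: real assume "0 < e"
      have "complex_of_real (t + 1 + e / 2) \<in> U"
        unfolding U_def using \<open>0 < e\<close> by (intro imageI) simp
      moreover have "complex_of_real (t + 1 + e / 2) \<noteq> complex_of_real (t + 1)"
        "dist (complex_of_real (t + 1 + e / 2)) (complex_of_real (t + 1)) < e"
        using \<open>0 < e\<close> by (simp_all add: dist_norm flip: of_real_diff)
      ultimately show "\<exists>u\<in>U. u \<noteq> complex_of_real (t + 1) \<and> dist u (complex_of_real (t + 1)) < e"
        by blast
    qed
    have zero_on_U: "cinner J (S u x) y = 0" if "u \<in> U" for u
    proof -
      obtain s where "t < s" "u = complex_of_real s"
        using \<open>u \<in> U\<close> by (auto simp: U_def)
      moreover have "T s x = T (s - t) (T t x)"
        using T_add[of "s - t" t x] \<open>0 \<le> t\<close> \<open>t < s\<close> by simp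
      ultimately have "S u x = 0"
        using ST[of s] \<open>T t x = 0\<close> \<open>0 \<le> t\<close> linear_0[OF T_linear, of "s - t"] by simp
      then show ?thesis
        by (simp add: cinner_def complex_eq_iff)
    qed
    have "cinner J (S (complex_of_real \<tau>) x) y = 0"
      by (rule analytic_continuation[OF holomorphic_on_subset[OF Sh \<open>V \<subseteq> sector \<delta>\<close>] \<open>open V\<close>
            \<open>connected V\<close> \<open>U \<subseteq> V\<close> \<open>complex_of_real (t + 1) \<in> V\<close> limit_point zero_on_U
            \<open>complex_of_real \<tau> \<in> V\<close>])
    then show ?thesis
      using ST[OF \<open>0 < \<tau>\<close>] by simp
  qed
  then have "inner (T \<tau> x) (T \<tau> x) = 0" if "0 < \<tau>" for \<tau>
    using that by (metis Re_cinner zero_complex.sel(1))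
  then have vanish: "T \<tau> x = 0" if "0 < \<tau>" for \<tau>
    using that by simp
  have "eventually (\<lambda>\<tau>. 0 = T \<tau> x) (at_right 0)"
    using eventually_at_right_less[of "0::real"] by (rule eventually_mono) (simp add: vanish)
  then have "((\<lambda>\<tau>. T \<tau> x) \<longlongrightarrow> 0) (at_right 0)"
    by (rule Lim_transform_eventually[OF tendsto_const])
  with \<open>x \<noteq> 0\<close> show False
    using tendsto_unique[OF trivial_limit_at_right_real T_tendsto_0] by blast
qed

end

locale hyponormal_holomorphic_C0_generator = holomorphic_C0_generator J T D A
  for J :: "'a::{real_inner,complete_space} \<Rightarrow> 'a" and T D A +
  assumes accretive: "pos_accretive J D A" and hyponormal: "hyponormal J D A"
begin

lemma normalized_inner_in_num_range:
  assumes "x \<in> D" "x \<noteq> 0"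
  shows "inner (A x) x / (norm x)\<^sup>2 \<in> Re ` num_range J D A"
proof -
  define v where "v = (1 / norm x) *\<^sub>R x"
  have "v \<in> D" "norm v = 1"
    using domain_scaleR(1)[OF assms(1)] assms(2) by (simp_all add: v_def)
  moreover have "inner (A v) v = inner (A x) x / (norm x)\<^sup>2"
    using domain_scaleR(2)[OF assms(1)] by (simp add: v_def power2_eq_square)
  ultimately have "cinner J (A v) v \<in> num_range J D A"
    unfolding num_range_def by blast
  with \<open>inner (A v) v = inner (A x) x / (norm x)\<^sup>2\<close> show ?thesis
    by (metis Re_cinner image_eqI)
qed

lemma inner_generator_pos:
  assumes "x \<in> D" "x \<noteq> 0"
  shows "0 < inner (A x) x"
proof -
  have "0 < inner (A x) x / (norm x)\<^sup>2"
    using accretive normalized_inner_in_num_range[OF assms] by (auto simp: pos_accretive_def)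
  with assms(2) show ?thesis
    by (simp add: zero_less_divide_iff)
qed

lemma m_num_le_inner_generator: "x \<in> D \<Longrightarrow> x \<noteq> 0 \<Longrightarrow> m_num J D A * (norm x)\<^sup>2 \<le> inner (A x) x"
  using m_num_le[OF accretive normalized_inner_in_num_range] by (simp add: field_simps)

end

section \<open>The height of an orbit\<close>

locale hyponormal_orbit = hyponormal_holomorphic_C0_generator J T D A
  for J :: "'a::{real_inner,complete_space} \<Rightarrow> 'a" and T D A +
  fixes u0 :: 'a
  assumes u0: "u0 \<noteq> 0"
begin

definition "height t = norm (T t u0)"
definition "height_sq t = inner (T t u0) (T t u0)"
definition "height_sq' t = -2 * inner (A (T t u0)) (T t u0)"
definition "height_sq'' t = 2 * (inner (A (A (T t u0))) (T t u0) + inner (A (T t u0)) (A (T t u0)))"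
definition "height' t = height_sq' t / (2 * height t)"

lemma height_sq_pos: "0 \<le> t \<Longrightarrow> 0 < height_sq t"
  using orbit_nonzero[OF u0] by (simp add: height_sq_def)

lemma height_pos: "0 \<le> t \<Longrightarrow> 0 < height t"
  using orbit_nonzero[OF u0] by (simp add: height_def)

lemma height_eq_sqrt: "height t = sqrt (height_sq t)"
  by (simp add: height_def height_sq_def norm_eq_sqrt_inner)

lemma height_sq_continuous_on: "continuous_on {0..} height_sq"
  unfolding height_sq_def using orbit_continuous_on[of u0] by (intro continuous_intros)

lemma height_continuous_on: "continuous_on {0..} height"
  unfolding height_def using orbit_continuous_on[of u0] by (intro continuous_intros)

lemma orbit_in_domain: "0 < t \<Longrightarrow> T t u0 \<in> D" "0 < t \<Longrightarrow> A (T t u0) \<in> D"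
  using iterate_orbit[of t t 0 u0] iterate_orbit[of t t 1 u0] by simp_all

lemma height_sq_has_derivative:
  assumes "0 < t"
  shows "(height_sq has_real_derivative height_sq' t) (at t)"
proof -
  note u' = orbit_has_vector_derivative(2)[OF assms, of u0]
  show ?thesis
    using bounded_bilinear.has_vector_derivative[OF bounded_bilinear_inner u' u']
    unfolding has_real_derivative_iff_has_vector_derivative height_sq_def[abs_def] height_sq'_def
    by (simp add: inner_commute)
qed

lemma height_sq'_has_derivative:
  assumes "0 < t"
  shows "(height_sq' has_real_derivative height_sq'' t) (at t)"
proof -
  note u' = orbit_has_vector_derivative(2)[OF assms, of u0]
  have Au': "((\<lambda>\<tau>. A (T \<tau> u0)) has_vector_derivative - A (A (T t u0))) (at t)"
    using iterate_has_vector_derivative[OF assms, of 1 u0] by (simp add: numeral_2_eq_2)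
  have "((\<lambda>\<tau>. inner (A (T \<tau> u0)) (T \<tau> u0)) has_real_derivative
      inner (A (T t u0)) (- A (T t u0)) + inner (- A (A (T t u0))) (T t u0)) (at t)"
    using bounded_bilinear.has_vector_derivative[OF bounded_bilinear_inner Au' u']
    by (simp add: has_real_derivative_iff_has_vector_derivative)
  from DERIV_cmult[OF this, of "-2"] show ?thesis
    unfolding height_sq'_def[abs_def] height_sq''_def by (simp add: algebra_simps)
qed

lemma height_sq'_neg: "0 < t \<Longrightarrow> height_sq' t < 0"
  using inner_generator_pos[OF orbit_in_domain(1) orbit_nonzero[OF u0]] by (simp add: height_sq'_def)

lemma height_sq'_square_le:
  assumes "0 < t"
  shows "(height_sq' t)\<^sup>2 \<le> height_sq t * height_sq'' t"
  using hyponormal_inner_square_le[OF hyponormal orbit_in_domain[OF assms]]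
  by (simp add: height_sq_def height_sq'_def height_sq''_def power2_norm_eq_inner power_mult_distrib algebra_simps)

lemma log_height_sq_convex: "convex_on {0..} (\<lambda>t. ln (height_sq t))"
proof (rule convex_on_atLeast_if_deriv_mono)
  show "continuous_on {0..} (\<lambda>t. ln (height_sq t))"
    using height_sq_continuous_on height_sq_pos by (intro continuous_on_ln) (auto simp: less_le)
  show "((\<lambda>t. ln (height_sq t)) has_real_derivative height_sq' t / height_sq t) (at t)" if "0 < t" for t
    using DERIV_chain2[OF DERIV_ln_divide[OF height_sq_pos] height_sq_has_derivative, of t] that
    by (simp add: field_simps)
  \<comment> \<open>The derivative of the log-derivative is nonnegative by the hyponormality inequality.\<close>
  define q where "q t = (height_sq'' t * height_sq t - height_sq' t * height_sq' t) / (height_sq t * height_sq t)" for t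
  have q: "((\<lambda>t. height_sq' t / height_sq t) has_real_derivative q t) (at t)" "0 \<le> q t" if "0 < t" for t
  proof -
    show "((\<lambda>t. height_sq' t / height_sq t) has_real_derivative q t) (at t)"
      using DERIV_divide[OF height_sq'_has_derivative height_sq_has_derivative, of t] height_sq_pos[of t] that
      by (simp add: q_def)
    show "0 \<le> q t"
      using height_sq'_square_le[OF that] by (simp add: q_def power2_eq_square mult.commute)
  qed
  show "height_sq' x / height_sq x \<le> height_sq' y / height_sq y" if "0 < x" "x \<le> y" for x y
  proof (rule DERIV_nonneg_imp_increasing_open[OF \<open>x \<le> y\<close>])
    show "\<exists>d. ((\<lambda>t. height_sq' t / height_sq t) has_real_derivative d) (at t) \<and> 0 \<le> d"
      if "x < t" "t < y" for t
      using q \<open>0 < x\<close> that by (meson less_trans)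
    show "continuous_on {x..y} (\<lambda>t. height_sq' t / height_sq t)"
      using q(1) \<open>0 < x\<close> by (intro continuous_at_imp_continuous_on ballI DERIV_continuous) (auto intro: less_le_trans)
  qed
qed

lemma ln_height: "0 \<le> t \<Longrightarrow> ln (height t) = ln (height_sq t) / 2"
  using height_sq_pos[of t] by (simp add: height_eq_sqrt ln_sqrt)

lemma exp_ln_height_sq: "0 \<le> t \<Longrightarrow> exp (ln (height_sq t) / 2) = height t"
  using height_pos[of t] by (simp flip: ln_height)

lemma height_log_convex:
  assumes "0 \<le> r" "r < s" "s < t"
  shows "height s \<le> height r powr ((t - s) / (t - r)) * height t powr ((s - r) / (t - r))"
proof -
  define b where "b = (s - r) / (t - r)"
  have b: "0 \<le> b" "b \<le> 1" "(t - s) / (t - r) = 1 - b" "b * (t - r) = s - r"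
    using assms by (auto simp: b_def field_simps)
  then have "(1 - b) * r + b * t = s"
    by (simp add: algebra_simps)
  have "ln (height_sq s) \<le> (1 - b) * ln (height_sq r) + b * ln (height_sq t)"
    using convex_onD[OF log_height_sq_convex b(1,2), of r t] assms \<open>(1 - b) * r + b * t = s\<close> by simp
  then have "ln (height s) \<le> (1 - b) * ln (height r) + b * ln (height t)"
    using assms by (simp add: ln_height)
  then have "exp (ln (height s)) \<le> exp ((1 - b) * ln (height r) + b * ln (height t))"
    by simp
  then have "height s \<le> exp ((1 - b) * ln (height r)) * exp (b * ln (height t))"
    using height_pos[of s] assms by (simp add: exp_add)
  also have "\<dots> = height r powr (1 - b) * height t powr b"
    using height_pos[of r] height_pos[of t] assms by (simp add: powr_def)
  finally show ?thesis
    using b(3) by (simp add: b_def)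
qed

lemma height_strict_decreasing:
  assumes "0 \<le> s" "s < t"
  shows "height t < height s"
proof -
  have "height_sq t < height_sq s"
  proof (rule DERIV_neg_imp_decreasing_open[OF assms(2)])
    show "\<exists>y. (height_sq has_real_derivative y) (at x) \<and> y < 0" if "s < x" "x < t" for x
    proof -
      have "0 < x"
        using that assms(1) by linarith
      then show ?thesis
        using height_sq_has_derivative height_sq'_neg by blast
    qed
    show "continuous_on {s..t} height_sq"
      using height_sq_continuous_on assms(1) by (auto elim!: continuous_on_subset)
  qed
  then show ?thesis
    using height_sq_pos assms by (simp add: height_eq_sqrt)
qed

lemma height_strictly_convex: "strictly_convex_on {0..} height"
  unfolding strictly_convex_on_def
proof (intro ballI impI allI)
  fix x y \<theta> :: real
  assume x: "x \<in> {0..}" and y: "y \<in> {0..}" and "x \<noteq> y" and \<theta>: "0 < \<theta> \<and> \<theta> < 1"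
  define g where "g t = ln (height_sq t) / 2" for t
  \<comment> \<open>Strict convexity comes from that of exp, as g is injective because height is.\<close>
  have "height x \<noteq> height y"
    using \<open>x \<noteq> y\<close> height_strict_decreasing[of x y] height_strict_decreasing[of y x] x y
    by (cases "x < y") auto
  then have "g x \<noteq> g y"
    using exp_ln_height_sq[of x] exp_ln_height_sq[of y] x y by (auto simp: g_def)
  have "ln (height_sq (\<theta> * x + (1 - \<theta>) * y)) \<le> \<theta> * ln (height_sq x) + (1 - \<theta>) * ln (height_sq y)"
    using convex_onD[OF log_height_sq_convex, of "1 - \<theta>" x y] x y \<theta> by (simp add: algebra_simps)
  then have "g (\<theta> * x + (1 - \<theta>) * y) \<le> \<theta> * g x + (1 - \<theta>) * g y"
    unfolding g_def by simp
  then have "exp (g (\<theta> * x + (1 - \<theta>) * y)) \<le> exp (\<theta> * g x + (1 - \<theta>) * g y)"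
    by (simp only: exp_le_cancel_iff)
  moreover have "0 \<le> \<theta> * x + (1 - \<theta>) * y"
    using x y \<theta> by simp
  ultimately have "height (\<theta> * x + (1 - \<theta>) * y) \<le> exp (\<theta> * g x + (1 - \<theta>) * g y)"
    using exp_ln_height_sq unfolding g_def by metis
  also have "\<dots> < \<theta> * exp (g x) + (1 - \<theta>) * exp (g y)"
    using exp_strictly_convex[OF \<open>g x \<noteq> g y\<close>] \<theta> by blast
  also have "\<dots> = \<theta> * height x + (1 - \<theta>) * height y"
    using x y exp_ln_height_sq by (simp add: g_def)
  finally show "height (\<theta> * x + (1 - \<theta>) * y) < \<theta> * height x + (1 - \<theta>) * height y" .
qed

lemma height_convex: "convex_on {0..} height"
proof (rule convex_on_linorderI)
  fix t x y :: real
  assume "0 < t" "t < 1" "x \<in> {0..}" "y \<in> {0..}" "x < y"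
  then have "height ((1 - t) * x + (1 - (1 - t)) * y) < (1 - t) * height x + (1 - (1 - t)) * height y"
    by (intro height_strictly_convex[unfolded strictly_convex_on_def, rule_format]) auto
  then show "height ((1 - t) *\<^sub>R x + t *\<^sub>R y) \<le> (1 - t) * height x + t * height y"
    by simp
qed (simp add: convex_real_interval)

lemma height_has_derivative:
  assumes "0 < t"
  shows "(height has_real_derivative height' t) (at t)"
proof -
  have "((\<lambda>t. sqrt (height_sq t)) has_real_derivative inverse (sqrt (height_sq t)) / 2 * height_sq' t) (at t)"
    using DERIV_chain2[OF DERIV_real_sqrt[OF height_sq_pos] height_sq_has_derivative[OF assms]] assms by simp
  then show ?thesis
    by (simp add: height'_def height_eq_sqrt[abs_def] field_simps)
qed

lemma diff_quotient_height_mono: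
  assumes "0 < s" "s \<le> t"
  shows "(height s - height 0) / s \<le> (height t - height 0) / t"
proof -
  have "height s \<le> (1 - s / t) * height 0 + s / t * height t"
    using convex_onD[OF height_convex, of "s / t" 0 t] assms by simp
  then have "height s - height 0 \<le> s / t * (height t - height 0)"
    using assms by (simp add: algebra_simps)
  then show ?thesis
    using assms by (simp add: field_simps)
qed

definition "right_deriv_0 = (INF t\<in>{0<..}. ereal ((height t - height 0) / t))"

lemma right_deriv_0_tendsto:
  "((\<lambda>t. ereal ((height t - height 0) / t)) \<longlongrightarrow> right_deriv_0) (at_right 0)"
  unfolding right_deriv_0_def using diff_quotient_height_mono
  by (intro tendsto_at_right_INF_if_mono) simp

lemma right_deriv_0_nonpos: "right_deriv_0 \<le> 0"
proof -
  have "right_deriv_0 \<le> ereal ((height 1 - height 0) / 1)"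
    unfolding right_deriv_0_def by (intro INF_lower) auto
  also have "\<dots> \<le> 0"
    using height_strict_decreasing[of 0 1] by (simp add: zero_ereal_def)
  finally show ?thesis .
qed

lemma right_deriv_0_eq_INF_deriv: "right_deriv_0 = (INF t\<in>{0<..}. ereal (deriv height t))"
proof (rule antisym)
  have "(height t - height 0) / t \<le> deriv height t" if "0 < t" for t
  proof -
    have "height 0 - height t \<ge> height' t * (0 - t)"
      using that height_has_derivative[OF that]
      by (intro convex_on_imp_above_tangent[OF height_convex]) (auto intro: has_field_derivative_at_within)
    then show ?thesis
      using that DERIV_imp_deriv[OF height_has_derivative[OF that]] by (simp add: field_simps)
  qed
  then show "right_deriv_0 \<le> (INF t\<in>{0<..}. ereal (deriv height t))"
    unfolding right_deriv_0_def by (intro INF_mono) auto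
next
  have "\<exists>\<xi>\<in>{0<..}. deriv height \<xi> \<le> (height t - height 0) / t" if t: "0 < t" for t
  proof -
    have "continuous_on {0..t} height"
      using height_continuous_on by (rule continuous_on_subset) auto
    moreover have "\<And>x. 0 < x \<Longrightarrow> x < t \<Longrightarrow> (height has_real_derivative height' x) (at x)"
      using height_has_derivative by blast
    ultimately obtain \<xi> where "0 < \<xi>" "\<xi> < t" "height t - height 0 = (t - 0) * height' \<xi>"
      using mvt_has_real_derivative[OF t] by blast
    then show ?thesis
      using DERIV_imp_deriv[OF height_has_derivative] t by (intro bexI[of _ \<xi>]) auto
  qed
  then show "(INF t\<in>{0<..}. ereal (deriv height t)) \<le> right_deriv_0"
    unfolding right_deriv_0_def by (intro INF_mono) auto
qed

lemma height_tendsto_0: "(height \<longlongrightarrow> height 0) (at_right 0)"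
proof -
  have "(height \<longlongrightarrow> height 0) (at 0 within {0..})"
    using height_continuous_on unfolding continuous_on_def by simp
  then show ?thesis
    by (simp add: at_within_Ici_at_right)
qed

lemma right_deriv_0_le_m_num:
  assumes "norm u0 = 1"
  shows "right_deriv_0 \<le> ereal (- m_num J D A)"
proof (rule tendsto_le[OF trivial_limit_at_right_real])
  have "((\<lambda>t. - height t * m_num J D A) \<longlongrightarrow> - height 0 * m_num J D A) (at_right 0)"
    by (intro tendsto_intros height_tendsto_0)
  then show "((\<lambda>t. ereal (- height t * m_num J D A)) \<longlongrightarrow> ereal (- m_num J D A)) (at_right 0)"
    using assms by (intro tendsto_ereal) (simp add: height_def)
  have deriv_le: "deriv height t \<le> - height t * m_num J D A" if "0 < t" for t
  proof -
    have "m_num J D A * (height t)\<^sup>2 \<le> inner (A (T t u0)) (T t u0)"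
      using m_num_le_inner_generator[OF orbit_in_domain(1)[OF that] orbit_nonzero[OF u0]] that
      by (simp add: height_def)
    moreover have "height t * deriv height t = - inner (A (T t u0)) (T t u0)"
      using DERIV_imp_deriv[OF height_has_derivative[OF that]] height_pos[of t] that
      by (simp add: height'_def height_sq'_def)
    ultimately have "height t * deriv height t \<le> height t * (- height t * m_num J D A)"
      by (simp add: power2_eq_square algebra_simps)
    then show ?thesis
      using mult_le_cancel_left_pos[of "height t"] height_pos[of t] that by (metis less_imp_le)
  qed
  have bound: "right_deriv_0 \<le> ereal (- height t * m_num J D A)" if "0 < t" for t
  proof -
    have "right_deriv_0 \<le> ereal (deriv height t)"
      unfolding right_deriv_0_eq_INF_deriv using that by (intro INF_lower) simp
    also have "\<dots> \<le> ereal (- height t * m_num J D A)"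
      using deriv_le[OF that] by simp
    finally show ?thesis .
  qed
  show "eventually (\<lambda>t. right_deriv_0 \<le> ereal (- height t * m_num J D A)) (at_right 0)"
    using eventually_at_right_less[of "0::real"] by (rule eventually_mono) (rule bound)
qed (rule tendsto_const)

lemma height_diff_quotient_tendsto:
  assumes "u0 \<in> D"
  shows "((\<lambda>t. (height t - height 0) / t) \<longlongrightarrow> height' 0) (at_right 0)"
proof -
  have lim: "((\<lambda>t. inner ((T t u0 - u0) /\<^sub>R t) (T t u0 + u0) / (height t + height 0)) \<longlongrightarrow>
      inner (- A u0) (u0 + u0) / (height 0 + height 0)) (at_right 0)"
    using height_pos[of 0]
    by (intro tendsto_intros generator_tendsto[OF assms] T_tendsto_0 height_tendsto_0) simp
  have limit_value: "inner (- A u0) (u0 + u0) / (height 0 + height 0) = height' 0"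
    by (simp add: height'_def height_sq'_def inner_add_right)
  have ev: "eventually (\<lambda>t. inner ((T t u0 - u0) /\<^sub>R t) (T t u0 + u0) / (height t + height 0)
      = (height t - height 0) / t) (at_right 0)"
    using eventually_at_right_less[of "0::real"]
  proof (rule eventually_mono)
    fix t :: real assume "0 < t"
    \<comment> \<open>The difference of squares removes the square root from the difference quotient.\<close>
    have "inner (T t u0 - u0) (T t u0 + u0) = (height t - height 0) * (height t + height 0)"
      by (simp add: height_def inner_diff_left inner_add_right inner_commute[of u0]
          power2_norm_eq_inner[symmetric] algebra_simps power2_eq_square)
    then have "inner ((T t u0 - u0) /\<^sub>R t) (T t u0 + u0) = (height t - height 0) * (height t + height 0) / t"
      by (metis inner_scaleR_left divide_inverse_commute)
    then show "inner ((T t u0 - u0) /\<^sub>R t) (T t u0 + u0) / (height t + height 0) = (height t - height 0) / t"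
      using height_pos[of t] height_pos[of 0] \<open>0 < t\<close> by (simp add: field_simps)
  qed
  show ?thesis
    using Lim_transform_eventually[OF lim ev] unfolding limit_value .
qed

lemma right_deriv_0_domain: "u0 \<in> D \<Longrightarrow> right_deriv_0 = ereal (height' 0)"
  using tendsto_unique[OF trivial_limit_at_right_real right_deriv_0_tendsto
      tendsto_ereal[OF height_diff_quotient_tendsto]] .

lemma height'_0_domain: "norm u0 = 1 \<Longrightarrow> height' 0 = - inner (A u0) u0"
  by (simp add: height'_def height_sq'_def height_def)

lemma height_C1:
  assumes "u0 \<in> D"
  shows "C1_on_closed_halfline height"
  unfolding C1_on_closed_halfline_def
proof (intro exI[of _ height'] conjI allI impI)
  fix t :: real assume "0 \<le> t"
  show "(height has_real_derivative height' t) (at t within {0..})"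
  proof (cases "t = 0")
    case True
    have "((\<lambda>y. (height y - height 0) / (y - 0)) \<longlongrightarrow> height' 0) (at 0 within {0..})"
      using height_diff_quotient_tendsto[OF assms] by (simp add: at_within_Ici_at_right)
    with True show ?thesis
      by (simp add: has_field_derivative_iff)
  next
    case False
    with \<open>0 \<le> t\<close> have "(height has_real_derivative height' t) (at t)"
      by (intro height_has_derivative) simp
    then show ?thesis
      by (rule has_field_derivative_at_within)
  qed
next
  have eq: "height' t = - inner (T t (A u0)) (T t u0) / norm (T t u0)" if "t \<in> {0..}" for t
    using domain_T[OF assms, of t] that by (simp add: height'_def height_sq'_def height_def)
  have "continuous_on {0..} (\<lambda>t. - inner (T t (A u0)) (T t u0) / norm (T t u0))"
    using orbit_continuous_on orbit_nonzero[OF u0] by (intro continuous_intros) auto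
  then show "continuous_on {0..} height'"
    by (rule continuous_on_eq) (simp add: eq)
qed

lemma height_smooth: "smooth_on {0<..} height"
proof (rule smooth_on_if_k_differentiable_on)
  fix n
  define U where "U k \<tau> = ((-1::real) ^ k) *\<^sub>R (A ^^ k) (T \<tau> u0)" for k \<tau>
  have "(U k has_vector_derivative U (Suc k) t) (at t)" if "t \<in> {0<..}" for k t
  proof -
    have "((\<lambda>\<tau>. (A ^^ k) (T \<tau> u0)) has_vector_derivative - (A ^^ Suc k) (T t u0)) (at t)"
      using iterate_has_vector_derivative that by simp
    from has_vector_derivative_scaleR[OF DERIV_const[of "(-1) ^ k"] this]
    show ?thesis
      by (simp add: U_def[abs_def])
  qed
  then have "k_differentiable_on n {0<..} (U 0)"
    by (rule k_differentiable_on_if_derivative_chain)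
  then have "k_differentiable_on n {0<..} height_sq"
    using k_differentiable_on_inner[of n _ "U 0" "U 0"] by (simp add: U_def[abs_def] height_sq_def[abs_def])
  moreover have "height_sq t \<in> {0<..}" if "t \<in> {0<..}" for t
    using height_sq_pos[of t] that by simp
  ultimately have "k_differentiable_on n {0<..} (\<lambda>t. height_sq t powr (1 / 2))"
    by (rule k_differentiable_on_compose[OF k_differentiable_on_powr])
  moreover have "height_sq t powr (1 / 2) = height t" if "t \<in> {0<..}" for t
    using height_sq_pos[of t] that by (simp add: height_eq_sqrt powr_half_sqrt)
  ultimately show "k_differentiable_on n {0<..} height"
    by (rule k_differentiable_on_cong[OF open_greaterThan, rotated]) simp
qed simp

end

theorem corollary2p6:
  fixes J :: "'a::{real_inner, complete_space} \<Rightarrow> 'a"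
    and T :: "real \<Rightarrow> 'a \<Rightarrow> 'a"
    and D :: "'a set"
    and A :: "'a \<Rightarrow> 'a"
  assumes J: "complex_structure J"
    and hol: "holomorphic_semigroup J T"
    and gen: "is_generator T D (\<lambda>x. - A x)"
    and acc: "pos_accretive J D A"
    and hyp: "hyponormal J D A"
  shows
    "(\<forall>x. x \<in> D \<and> A x \<in> D \<and> norm x = 1 \<longrightarrow>
        2 * (Re (cinner J (A x) x))\<^sup>2 \<le> Re (cinner J (A (A x)) x) + (norm (A x))\<^sup>2)
     \<and> (\<forall>u0. u0 \<noteq> 0 \<longrightarrow> (\<forall>r s t. 0 \<le> r \<and> r < s \<and> s < t \<longrightarrow>
          norm (T s u0) \<le> norm (T r u0) powr ((t - s) / (t - r)) * norm (T t u0) powr ((s - r) / (t - r))))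
     \<and> (\<forall>u0. u0 \<noteq> 0 \<longrightarrow>
          (let h = (\<lambda>t. norm (T t u0)) in
            strict_antimono_on {0..} h \<and> strictly_convex_on {0..} h \<and>
            (\<forall>t>0. h differentiable (at t)) \<and>
            (\<exists>d::ereal. d \<le> 0 \<and> ((\<lambda>t. ereal ((h t - h 0) / t)) \<longlongrightarrow> d) (at_right 0) \<and>
               (norm u0 = 1 \<longrightarrow> d = (INF t\<in>{0<..}. ereal (deriv h t)) \<and> d \<le> ereal (- m_num J D A)) \<and>
               (u0 \<in> D \<and> norm u0 = 1 \<longrightarrow> d = ereal (- Re (cinner J (A u0) u0)) \<and>
                  C1_on_closed_halfline h \<and> smooth_on {0<..} h))))"
proof -
  interpret hyponormal_holomorphic_C0_generator J T D A
    using J hol gen acc hyp by unfold_locales (simp_all add: holomorphic_semigroup_def)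
  show ?thesis (is "?a \<and> (\<forall>u0. u0 \<noteq> 0 \<longrightarrow> ?b u0) \<and> (\<forall>u0. u0 \<noteq> 0 \<longrightarrow> ?c u0)")
  proof -
    have ?a
      using hyponormal_inner_square_le[OF hyp] by fastforce
    moreover have "?b u0 \<and> ?c u0" if "u0 \<noteq> 0" for u0
    proof -
      interpret hyponormal_orbit J T D A u0
        using that by unfold_locales
      have "(\<lambda>t. norm (T t u0)) = height"
        by (simp add: fun_eq_iff height_def)
      moreover have "\<forall>t>0. height differentiable (at t)"
        using height_has_derivative real_differentiable_def by blast
      ultimately show ?thesis
        using height_log_convex height_strict_decreasing height_strictly_convex
          right_deriv_0_nonpos right_deriv_0_tendsto right_deriv_0_eq_INF_deriv right_deriv_0_le_m_num
          right_deriv_0_domain height'_0_domain height_C1 height_smooth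
        by (auto simp: Let_def monotone_on_def height_def[symmetric] intro!: exI[of _ right_deriv_0])
    qed
    ultimately show ?thesis
      by blast
  qed
qed

end
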